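(* Let $n>m\geq 2$ and let $\mathbf{p}=(p_1,\ldots,p_n)$ be a probability vector with $p_1\geq\cdots\geq p_n\geq 0$. Let $\overline{\mathbf{q}}$ be the probability vector obtained from $\mathbf{p}$ by performing exactly $n-m$ Huffman merging steps, with ties broken arbitrarily. Then $$\mathtt{D}(\mathbf{p},\overline{\mathbf{q}})\leq\min_{\mathbf{q}}\mathtt{D}(\mathbf{p},\mathbf{q})+\alpha,\qquad \alpha=1-\frac{1+\ln(\ln 2)}{\ln 2}<0.08608,$$ where the minimum ranges over all probability vectors $\mathbf{q}=(q_1,\ldots,q_m)$ with $m$ components.
   Context: $H$ is Shannon entropy in bits. For probability vectors $\mathbf{p}$ (of length $n$) and $\mathbf{q}$ (of length $m$), $W(\mathbf{p},\mathbf{q})$ denotes the minimum entropy of a bivariate probability distribution (an $m\times n$ nonnegative matrix) whose marginals are $\mathbf{p}$ and $\mathbf{q}$. Then $$\mathtt{D}(\mathbf{p},\mathbf{q})=2W(\mathbf{p},\mathbf{q})-H(\mathbf{p})-H(\mathbf{q}),$$ which equals $\min\{H(X\mid Y)+H(Y\mid X)\}$ over all joint distributions of $(X,Y)$ with $X\sim\mathbf{p}$ and $Y\sim\mathbf{q}$. A Huffman merging step applied to a probability vector removes two smallest entries $x,y$, inserts the entry $x+y$, and re-sorts the vector in nonincreasing order. *)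

theory Defs
  imports Complex_Main
begin

definition prob_vec :: "real list \<Rightarrow> bool" where
  "prob_vec p \<longleftrightarrow> (\<forall>x\<in>set p. 0 \<le> x) \<and> sum_list p = 1"

definition ent_term :: "real \<Rightarrow> real" where
  "ent_term x = (if x = 0 then 0 else - x * log 2 x)"

definition H :: "real list \<Rightarrow> real" where
  "H p = sum_list (map ent_term p)"

definition coupling :: "real list \<Rightarrow> real list \<Rightarrow> (nat \<Rightarrow> nat \<Rightarrow> real) \<Rightarrow> bool" where
  "coupling p q M \<longleftrightarrow>
     (\<forall>i<length q. \<forall>j<length p. 0 \<le> M i j) \<and>
     (\<forall>i<length q. (\<Sum>j<length p. M i j) = q ! i) \<and>
     (\<forall>j<length p. (\<Sum>i<length q. M i j) = p ! j)"

definition mat_entropy :: "nat \<Rightarrow> nat \<Rightarrow> (nat \<Rightarrow> nat \<Rightarrow> real) \<Rightarrow> real" where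
  "mat_entropy m n M = (\<Sum>i<m. \<Sum>j<n. ent_term (M i j))"

(* minimum entropy coupling (the minimum is attained, so Inf = min) *)
definition W :: "real list \<Rightarrow> real list \<Rightarrow> real" where
  "W p q = Inf {mat_entropy (length q) (length p) M | M. coupling p q M}"

definition D :: "real list \<Rightarrow> real list \<Rightarrow> real" where
  "D p q = 2 * W p q - H p - H q"

(* The resulting vector does not depend on how
   ties are broken, so this is a function. *)
definition huffman_step :: "real list \<Rightarrow> real list" where
  "huffman_step xs = (let s = sort xs in rev (sort ((s ! 0 + s ! 1) # drop 2 s)))"

end

theory Submission
  imports Defs "HOL-Library.Multiset" "HOL-Combinatorics.Permutations"
begin

text \<open>For a coupling of \<open>p\<close> and \<open>q\<close>, the conditional entropy \<open>H(X | Y)\<close> is concave in the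
  coupling, so it is at least its value at a coupling in which \<open>Y\<close> is a function of \<open>X\<close>:
  at least \<open>H(p)\<close> minus the entropy of some aggregation of \<open>p\<close> into \<open>m\<close> blocks. Together
  with \<open>H(p) \<le> W(p, q)\<close> this bounds \<open>D(p, q)\<close> from below. The Huffman vector is itself an
  aggregation of \<open>p\<close>, whence \<open>D(p, q) \<le> H(p) - H(q)\<close> for it. It remains to see that no
  aggregation of \<open>p\<close> into \<open>m\<close> blocks has entropy above \<open>H(q) + alpha\<close> for the Huffman vector
  \<open>q\<close>: the entries of \<open>p\<close> above twice the minimum \<open>c\<close> of \<open>q\<close> occur in \<open>q\<close> unmerged, the
  other entries of \<open>q\<close> lie in \<open>[c, 2 c]\<close>, and an aggregation can do no better than to spread
  the remaining mass evenly; comparing with a vector whose entries are within a factor \<open>2\<close>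
  of each other costs at most \<open>alpha\<close>.\<close>

lemma exp_mult_le_taylor:
  fixes x :: real assumes "0 \<le> x"
  shows "exp x * (1 - x ^ n / fact n) \<le> (\<Sum>k<n. x ^ k / fact k)"
proof -
  obtain t where t: "\<bar>t\<bar> \<le> \<bar>x\<bar>" "exp x = (\<Sum>k<n. x ^ k / fact k) + exp t / fact n * x ^ n"
    using Maclaurin_exp_le[of x n] by blast
  define r where "r = x ^ n / fact n"
  have "exp t * r \<le> exp x * r"
    using t(1) assms by (intro mult_right_mono) (auto simp: r_def)
  moreover have "exp x = (\<Sum>k<n. x ^ k / fact k) + exp t * r" using t(2) by (simp add: r_def)
  ultimately show ?thesis by (simp add: r_def[symmetric] algebra_simps)
qed

lemma taylor_le_exp:
  fixes x :: real assumes "0 \<le> x"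
  shows "(\<Sum>k<n. x ^ k / fact k) \<le> exp x"
proof -
  obtain t where "exp x = (\<Sum>k<n. x ^ k / fact k) + exp t / fact n * x ^ n"
    using Maclaurin_exp_le[of x n] by blast
  moreover have "0 \<le> exp t / fact n * x ^ n" using assms by simp
  ultimately show ?thesis by linarith
qed

lemma ln_2_bounds: "693147 / 10^6 < ln (2::real)" "ln (2::real) < 693148 / 10^6"
proof -
  define x :: real where "x = 693147 / 10^6"
  have pos: "0 < 1 - x ^ 12 / fact 12" by (simp add: x_def fact_numeral eval_nat_numeral)
  have "(\<Sum>k<12. x ^ k / fact k) < 2 * (1 - x ^ 12 / fact 12)"
    by (simp add: x_def lessThan_Suc fact_numeral eval_nat_numeral)
  with exp_mult_le_taylor[of x 12] have "exp x * (1 - x ^ 12 / fact 12) < 2 * (1 - x ^ 12 / fact 12)"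
    by (simp add: x_def)
  hence "exp x < 2" using pos by (simp only: mult_less_cancel_right_pos)
  thus "693147 / 10^6 < ln (2::real)" using ln_less_cancel_iff[of "exp x" 2] by (simp add: x_def)
  define y :: real where "y = 693148 / 10^6"
  have "2 < (\<Sum>k<10. y ^ k / fact k)" by (simp add: y_def lessThan_Suc fact_numeral eval_nat_numeral)
  also have "\<dots> \<le> exp y" by (rule taylor_le_exp) (simp add: y_def)
  finally show "ln (2::real) < 693148 / 10^6" using ln_less_cancel_iff[of 2 "exp y"] by (simp add: y_def)
qed

definition alpha :: real where "alpha = 1 - (1 + ln (ln 2)) / ln 2"

lemma alpha_nonneg: "0 \<le> alpha"
proof -
  have "ln (ln (2::real)) \<le> ln 2 - 1" using ln_le_minus_one[of "ln 2"] by simp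
  thus ?thesis by (simp add: alpha_def field_simps)
qed

lemma alpha_less: "alpha < 0.08608"
proof -
  define w :: real where "w = 91392 / 10^5 * (693148 / 10^6) - 1"
  have "1 / (693147 / 10^6) < (\<Sum>k<10. (- w) ^ k / fact k)"
    by (simp add: w_def lessThan_Suc fact_numeral eval_nat_numeral)
  also have "\<dots> \<le> exp (- w)" by (rule taylor_le_exp) (simp add: w_def)
  finally have "exp w < 693147 / 10^6" by (simp add: exp_minus field_simps)
  also have "\<dots> < ln 2" by (rule ln_2_bounds(1))
  finally have "w < ln (ln 2)" using ln_less_cancel_iff[of "exp w" "ln 2"] by simp
  moreover have "91392 / 10^5 * ln 2 - 1 < w" using ln_2_bounds(2) by (simp add: w_def)
  ultimately have "91392 / 10^5 * ln 2 < 1 + ln (ln (2::real))" by linarith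
  thus ?thesis by (simp add: alpha_def field_simps)
qed

lemma ent_term_eq: "ent_term x = - (x * log 2 x)"
  by (simp add: ent_term_def)

lemma ent_term_zero [simp]: "ent_term 0 = 0"
  by (simp add: ent_term_def)

lemma ent_term_add_le:
  assumes "0 \<le> x" "0 \<le> y" shows "ent_term (x + y) \<le> ent_term x + ent_term y"
proof -
  have "x * log 2 x \<le> x * log 2 (x + y)" "y * log 2 y \<le> y * log 2 (x + y)"
    using assms by (auto intro!: mult_left_mono simp: le_less)
  thus ?thesis by (simp add: ent_term_eq algebra_simps)
qed

lemma ent_term_sum_le:
  assumes "\<And>a. a \<in> A \<Longrightarrow> 0 \<le> f a"
  shows "ent_term (sum f A) \<le> (\<Sum>a\<in>A. ent_term (f a))"
  using assms
proof (induction A rule: infinite_finite_induct)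
  case (insert a A)
  have "ent_term (sum f (insert a A)) \<le> ent_term (f a) + ent_term (sum f A)"
    using insert by (auto intro!: ent_term_add_le sum_nonneg)
  with insert show ?case by simp
qed simp_all

lemma ent_term_mult:
  assumes "0 \<le> c" "0 \<le> x" shows "ent_term (c * x) = c * ent_term x - c * x * log 2 c"
  using assms by (cases "c = 0 \<or> x = 0") (auto simp: ent_term_eq log_mult algebra_simps)

lemma ent_term_le_tangent:
  assumes "0 \<le> x" "0 < y" shows "ent_term x \<le> - (x * log 2 y) + (y - x) / ln 2"
proof (cases "x = 0")
  case False
  hence x: "0 < x" using assms by auto
  have "x * ln (y / x) \<le> x * (y / x - 1)"
    using x assms by (intro mult_left_mono ln_le_minus_one) auto
  hence "x * (ln y - ln x) / ln 2 \<le> (y - x) / ln 2"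
    using x assms by (simp add: ln_div algebra_simps divide_right_mono)
  thus ?thesis by (simp add: ent_term_eq log_def algebra_simps diff_divide_distrib)
qed (use assms in simp)

text \<open>For \<open>x, X > 0\<close> this is \<open>x log\<^sub>2 (X / x)\<close>.\<close>
definition rel_ent :: "real \<Rightarrow> real \<Rightarrow> real" where
  "rel_ent x X = ent_term x + x * log 2 X"

lemma rel_ent_add_le:
  assumes "0 \<le> x" "0 \<le> y" "0 \<le> X" "0 \<le> Y" "0 < x \<Longrightarrow> 0 < X" "0 < y \<Longrightarrow> 0 < Y"
  shows "rel_ent x X + rel_ent y Y \<le> rel_ent (x + y) (X + Y)"
proof -
  consider "x = 0" | "y = 0" | "0 < x" "0 < y" using assms by linarith
  then show ?thesis
  proof cases
    case 1
    show ?thesis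
      using assms by (cases "y = 0") (auto simp: 1 rel_ent_def intro!: mult_left_mono)
  next
    case 2
    show ?thesis
      using assms by (cases "x = 0") (auto simp: 2 rel_ent_def intro!: mult_left_mono)
  next
    case 3
    define S where "S = x + y"
    define T where "T = X + Y"
    have pos: "0 < X" "0 < Y" "0 < S" "0 < T" using 3 assms by (auto simp: S_def T_def)
    have tangent: "rel_ent z Z \<le> z * (log 2 T - log 2 S) + (Z * S / T - z) / ln 2"
      if "0 \<le> z" "0 < Z" for z Z
      using ent_term_le_tangent[of z "Z * S / T"] that pos
      by (simp add: rel_ent_def log_mult log_divide algebra_simps)
    have "X * S / T + Y * S / T = (X + Y) * S / T" by (simp add: add_divide_distrib distrib_right)
    also have "\<dots> = S" using pos by (simp add: T_def)
    finally have "(X * S / T - x) / ln 2 + (Y * S / T - y) / ln 2 = 0"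
      by (simp add: diff_divide_distrib[symmetric] add_divide_distrib[symmetric] S_def)
        (simp add: add_divide_distrib)
    with add_mono[OF tangent[of x X] tangent[of y Y]] assms pos
    have "rel_ent x X + rel_ent y Y \<le> S * (log 2 T - log 2 S)"
      by (simp add: S_def algebra_simps)
    thus ?thesis by (simp add: S_def T_def rel_ent_def ent_term_eq algebra_simps)
  qed
qed

lemma rel_ent_ge:
  assumes "0 < x" "0 < X" shows "x * (X - x) / (X * ln 2) \<le> rel_ent x X"
proof -
  have "ln (x / X) \<le> x / X - 1" using assms by (intro ln_le_minus_one) simp
  hence "x * (1 - x / X) \<le> x * (ln X - ln x)"
    using assms by (intro mult_left_mono) (auto simp: ln_div)
  hence "x * (1 - x / X) / ln 2 \<le> x * (ln X - ln x) / ln 2" by (simp add: divide_right_mono)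
  thus ?thesis
    using assms by (simp add: rel_ent_def ent_term_eq log_def field_simps)
qed

text \<open>\<open>split_ent A v\<close> is \<open>sum v A\<close> times the entropy of the normalised vector \<open>v / sum v A\<close>.\<close>
definition split_ent :: "'a set \<Rightarrow> ('a \<Rightarrow> real) \<Rightarrow> real" where
  "split_ent A v = (\<Sum>j\<in>A. ent_term (v j)) - ent_term (sum v A)"

lemma split_ent_eq_rel_ent: "split_ent A v = (\<Sum>j\<in>A. rel_ent (v j) (sum v A))"
  by (simp add: split_ent_def rel_ent_def ent_term_eq sum_subtractf sum_distrib_right sum_negf)

lemma split_ent_add_ge:
  assumes "finite A" "\<And>j. j \<in> A \<Longrightarrow> 0 \<le> u j" "\<And>j. j \<in> A \<Longrightarrow> 0 \<le> v j"
  shows "split_ent A u + split_ent A v \<le> split_ent A (\<lambda>j. u j + v j)"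
proof -
  have le_sum: "f j \<le> sum f A" if "\<And>j. j \<in> A \<Longrightarrow> 0 \<le> f j" "j \<in> A" for f :: "'a \<Rightarrow> real" and j
    using assms(1) that by (intro member_le_sum) auto
  have "split_ent A u + split_ent A v = (\<Sum>j\<in>A. rel_ent (u j) (sum u A) + rel_ent (v j) (sum v A))"
    by (simp add: split_ent_eq_rel_ent sum.distrib)
  also have "\<dots> \<le> (\<Sum>j\<in>A. rel_ent (u j + v j) (sum u A + sum v A))"
    using assms le_sum[of u] le_sum[of v]
    by (intro sum_mono rel_ent_add_le) (auto intro: sum_nonneg less_le_trans)
  also have "\<dots> = split_ent A (\<lambda>j. u j + v j)" by (simp add: split_ent_eq_rel_ent sum.distrib)
  finally show ?thesis .
qed

lemma split_ent_mult:
  assumes "0 \<le> c" "\<And>j. j \<in> A \<Longrightarrow> 0 \<le> v j"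
  shows "split_ent A (\<lambda>j. c * v j) = c * split_ent A v"
proof -
  have "(\<Sum>j\<in>A. ent_term (c * v j)) = (\<Sum>j\<in>A. c * ent_term (v j) - c * v j * log 2 c)"
    using assms by (intro sum.cong refl ent_term_mult) auto
  moreover have "ent_term (\<Sum>j\<in>A. c * v j) = c * ent_term (sum v A) - c * sum v A * log 2 c"
    using assms by (simp add: sum_distrib_left[symmetric] ent_term_mult sum_nonneg)
  ultimately show ?thesis
    by (simp add: split_ent_def sum_subtractf sum_distrib_left sum_distrib_right algebra_simps)
qed

lemma split_ent_concave:
  assumes "finite A" "0 \<le> l" "l \<le> 1" "\<And>j. j \<in> A \<Longrightarrow> 0 \<le> u j" "\<And>j. j \<in> A \<Longrightarrow> 0 \<le> v j"
  shows "l * split_ent A u + (1 - l) * split_ent A v \<le> split_ent A (\<lambda>j. l * u j + (1 - l) * v j)"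
  using assms split_ent_add_ge[of A "\<lambda>j. l * u j" "\<lambda>j. (1 - l) * v j"]
  by (simp add: split_ent_mult)

lemma split_ent_ge_card:
  assumes "finite T" "T \<noteq> {}" "0 < \<mu>" "\<And>j. j \<in> T \<Longrightarrow> \<mu> \<le> p j"
  shows "(real (card T) - 1) * \<mu> / ln 2 \<le> split_ent T p"
proof -
  define P where "P = sum p T"
  define d where "d = (real (card T) - 1) * \<mu>"
  have pos: "0 < p j" if "j \<in> T" for j using assms that by force
  have "0 < P" unfolding P_def using assms pos by (intro sum_pos) auto
  have d_le: "d \<le> P - p j" if j: "j \<in> T" for j
  proof -
    have "real (card (T - {j})) * \<mu> \<le> sum p (T - {j})"
      using assms by (intro sum_bounded_below) auto
    moreover have "real (card (T - {j})) = real (card T) - 1"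
      using assms j by (simp add: of_nat_diff card_gt_0_iff Suc_le_eq)
    ultimately show ?thesis using sum.remove[OF assms(1) j, of p] by (simp add: P_def d_def)
  qed
  have "d / ln 2 = (\<Sum>j\<in>T. p j * d / (P * ln 2))"
    using \<open>0 < P\<close> by (simp add: sum_divide_distrib[symmetric] sum_distrib_right[symmetric] P_def)
  also have "\<dots> \<le> (\<Sum>j\<in>T. p j * (P - p j) / (P * ln 2))"
    using d_le pos \<open>0 < P\<close> by (intro sum_mono divide_right_mono mult_left_mono) (auto intro: less_imp_le)
  also have "\<dots> \<le> (\<Sum>j\<in>T. rel_ent (p j) P)"
    using pos \<open>0 < P\<close> by (intro sum_mono rel_ent_ge) auto
  finally show ?thesis by (simp add: split_ent_eq_rel_ent P_def d_def)
qed

definition aggregate :: "nat \<Rightarrow> (nat \<Rightarrow> nat) \<Rightarrow> (nat \<Rightarrow> real) \<Rightarrow> nat \<Rightarrow> real" where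
  "aggregate n \<sigma> p i = (\<Sum>j\<in>{j\<in>{..<n}. \<sigma> j = i}. p j)"

text \<open>For a coupling \<open>M\<close> of \<open>(X, Y)\<close>, with rows indexed by the values of \<open>Y\<close>, this is \<open>H(X | Y)\<close>.\<close>
definition cond_ent :: "nat \<Rightarrow> nat \<Rightarrow> (nat \<Rightarrow> nat \<Rightarrow> real) \<Rightarrow> real" where
  "cond_ent m n M = (\<Sum>i<m. split_ent {..<n} (M i))"

lemma cond_ent_eq: "cond_ent m n M = mat_entropy m n M - (\<Sum>i<m. ent_term (\<Sum>j<n. M i j))"
  by (simp add: cond_ent_def split_ent_def mat_entropy_def sum_subtractf)

lemma cond_ent_concave:
  assumes "0 \<le> l" "l \<le> 1" "\<forall>i<m. \<forall>j<n. 0 \<le> M1 i j" "\<forall>i<m. \<forall>j<n. 0 \<le> M2 i j"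
  shows "l * cond_ent m n M1 + (1 - l) * cond_ent m n M2
           \<le> cond_ent m n (\<lambda>i j. l * M1 i j + (1 - l) * M2 i j)"
  unfolding cond_ent_def using assms
  by (auto simp: sum_distrib_left sum.distrib[symmetric] intro!: sum_mono split_ent_concave)

lemma sum_graph_row:
  "(\<Sum>j<n. if \<sigma> j = i then p j else 0) = aggregate n \<sigma> p i"
  unfolding aggregate_def by (rule sum.inter_filter[symmetric]) simp

lemma mat_entropy_graph:
  assumes "\<And>j. j < n \<Longrightarrow> \<sigma> j < m"
  shows "mat_entropy m n (\<lambda>i j. if \<sigma> j = i then p j else 0) = (\<Sum>j<n. ent_term (p j))"
proof -
  have "ent_term (if b then x else 0) = (if b then ent_term x else 0)" for b x by simp
  hence "mat_entropy m n (\<lambda>i j. if \<sigma> j = i then p j else 0)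
      = (\<Sum>j<n. \<Sum>i<m. if \<sigma> j = i then ent_term (p j) else 0)"
    unfolding mat_entropy_def by (subst sum.swap) simp
  also have "\<dots> = (\<Sum>j<n. ent_term (p j))" using assms by simp
  finally show ?thesis .
qed

lemma cond_ent_graph:
  assumes "\<And>j. j < n \<Longrightarrow> \<sigma> j < m"
  shows "cond_ent m n (\<lambda>i j. if \<sigma> j = i then p j else 0)
           = (\<Sum>j<n. ent_term (p j)) - (\<Sum>i<m. ent_term (aggregate n \<sigma> p i))"
  using assms by (simp add: cond_ent_eq mat_entropy_graph sum_graph_row)

lemma graph_of_single_support:
  fixes M :: "nat \<Rightarrow> nat \<Rightarrow> real"
  assumes "0 < m" "\<forall>j<n. (\<Sum>i<m. M i j) = p j"
    and "\<And>i i' j. i < m \<Longrightarrow> i' < m \<Longrightarrow> j < n \<Longrightarrow> M i j \<noteq> 0 \<Longrightarrow> M i' j \<noteq> 0 \<Longrightarrow> i = i'"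
  obtains \<sigma> where "\<forall>j<n. \<sigma> j < m"
    "\<And>i j. i < m \<Longrightarrow> j < n \<Longrightarrow> M i j = (if \<sigma> j = i then p j else 0)"
proof
  define \<sigma> where "\<sigma> j = (if \<exists>i<m. M i j \<noteq> 0 then (SOME i. i < m \<and> M i j \<noteq> 0) else 0)" for j
  have \<sigma>: "\<sigma> j < m \<and> (\<forall>i<m. M i j \<noteq> 0 \<longrightarrow> i = \<sigma> j)" if "j < n" for j
  proof (cases "\<exists>i<m. M i j \<noteq> 0")
    case True
    hence "\<sigma> j < m \<and> M (\<sigma> j) j \<noteq> 0" unfolding \<sigma>_def using someI_ex[OF True] by simp
    thus ?thesis using assms(3) that by blast
  qed (use assms(1) \<sigma>_def in auto)
  thus "\<forall>j<n. \<sigma> j < m" by blast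
  fix i j assume ij: "i < m" "j < n"
  have "p j = (\<Sum>i'<m. M i' j)" using assms(2) ij(2) by simp
  also have "\<dots> = (\<Sum>i'<m. if i' = \<sigma> j then M (\<sigma> j) j else 0)"
    using \<sigma> ij(2) by (intro sum.cong) auto
  also have "\<dots> = M (\<sigma> j) j" using \<sigma>[OF ij(2)] by simp
  finally show "M i j = (if \<sigma> j = i then p j else 0)" using \<sigma> ij by auto
qed

definition support :: "nat \<Rightarrow> nat \<Rightarrow> (nat \<Rightarrow> nat \<Rightarrow> real) \<Rightarrow> (nat \<times> nat) set" where
  "support m n M = {(i, j). i < m \<and> j < n \<and> M i j \<noteq> 0}"

lemma finite_support: "finite (support m n M)"
  by (rule finite_subset[of _ "{..<m} \<times> {..<n}"]) (auto simp: support_def)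

lemma cond_ent_cong:
  "(\<And>i j. i < m \<Longrightarrow> j < n \<Longrightarrow> M i j = M' i j) \<Longrightarrow> cond_ent m n M = cond_ent m n M'"
  by (simp add: cond_ent_def split_ent_def)

text \<open>Moving the mass of entry \<open>(i2, j)\<close> onto \<open>(i1, j)\<close>, or that of \<open>(i1, j)\<close> onto \<open>(i2, j)\<close>,
  keeps the column sums and removes a nonzero entry; \<open>M\<close> is a convex combination of the two results.\<close>
lemma split_column:
  fixes M :: "nat \<Rightarrow> nat \<Rightarrow> real"
  assumes nonneg: "\<forall>i<m. \<forall>j<n. 0 \<le> M i j"
    and "j < n" "i1 < m" "i2 < m" "i1 \<noteq> i2" "M i1 j \<noteq> 0" "M i2 j \<noteq> 0"
  obtains l M1 M2 where "0 \<le> l" "l \<le> 1"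
    "\<forall>i<m. \<forall>j<n. 0 \<le> M1 i j" "\<forall>i<m. \<forall>j<n. 0 \<le> M2 i j"
    "\<forall>j. (\<Sum>i<m. M1 i j) = (\<Sum>i<m. M i j)" "\<forall>j. (\<Sum>i<m. M2 i j) = (\<Sum>i<m. M i j)"
    "card (support m n M1) < card (support m n M)" "card (support m n M2) < card (support m n M)"
    "M = (\<lambda>i j. l * M1 i j + (1 - l) * M2 i j)"
proof -
  define x1 where "x1 = M i1 j"
  define x2 where "x2 = M i2 j"
  have pos: "0 < x1" "0 < x2" using assms by (force simp: x1_def x2_def)+
  define M1 where
    "M1 = (\<lambda>i j'. M i j' + (if j' = j \<and> i = i1 then x2 else 0) - (if j' = j \<and> i = i2 then x2 else 0))"
  define M2 where
    "M2 = (\<lambda>i j'. M i j' + (if j' = j \<and> i = i2 then x1 else 0) - (if j' = j \<and> i = i1 then x1 else 0))"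
  define l where "l = x1 / (x1 + x2)"
  have delta: "(\<Sum>i<m. if j' = j \<and> i = a then x else 0) = (if j' = j then x else 0)"
    if "a < m" for j' a and x :: real
    using that by (cases "j' = j") auto
  have card_less: "card (support m n M') < card (support m n M)"
    if "support m n M' \<subseteq> support m n M - {(i, j)}" "(i, j) \<in> support m n M" for M' i
    using that finite_support by (meson card_Diff1_less card_mono dual_order.strict_trans2 finite_Diff)
  show ?thesis
  proof
    show "0 \<le> l" "l \<le> 1" using pos by (auto simp: l_def)
    show "\<forall>i<m. \<forall>j<n. 0 \<le> M1 i j" "\<forall>i<m. \<forall>j<n. 0 \<le> M2 i j"
      using nonneg pos assms(5) by (auto simp: M1_def M2_def x1_def x2_def)
    show "\<forall>j. (\<Sum>i<m. M1 i j) = (\<Sum>i<m. M i j)" "\<forall>j. (\<Sum>i<m. M2 i j) = (\<Sum>i<m. M i j)"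
      using assms(3,4) by (simp_all add: M1_def M2_def sum.distrib sum_subtractf delta)
    have "support m n M1 \<subseteq> support m n M - {(i2, j)}" "support m n M2 \<subseteq> support m n M - {(i1, j)}"
      using assms(5) pos by (auto simp: support_def M1_def M2_def x1_def x2_def)
    moreover have "(i1, j) \<in> support m n M" "(i2, j) \<in> support m n M"
      using assms by (auto simp: support_def)
    ultimately show "card (support m n M1) < card (support m n M)"
      "card (support m n M2) < card (support m n M)"
      by (auto intro: card_less)
    have "l * x2 = (1 - l) * x1" using pos by (simp add: l_def field_simps)
    thus "M = (\<lambda>i j. l * M1 i j + (1 - l) * M2 i j)"
      using assms(5) by (intro ext) (auto simp: M1_def M2_def x1_def x2_def algebra_simps)
  qed
qed

lemma cond_ent_ge_graph:
  fixes M :: "nat \<Rightarrow> nat \<Rightarrow> real"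
  assumes "0 < m" "\<forall>i<m. \<forall>j<n. 0 \<le> M i j" "\<forall>j<n. (\<Sum>i<m. M i j) = p j"
  shows "\<exists>\<sigma>. (\<forall>j<n. \<sigma> j < m) \<and>
           (\<Sum>j<n. ent_term (p j)) - (\<Sum>i<m. ent_term (aggregate n \<sigma> p i)) \<le> cond_ent m n M"
  using assms(2,3)
proof (induction "card (support m n M)" arbitrary: M rule: less_induct)
  case less
  show ?case
  proof (cases "\<forall>i i' j. i < m \<longrightarrow> i' < m \<longrightarrow> j < n \<longrightarrow> M i j \<noteq> 0 \<longrightarrow> M i' j \<noteq> 0 \<longrightarrow> i = i'")
    case True
    then obtain \<sigma> where \<sigma>: "\<forall>j<n. \<sigma> j < m"
      "\<And>i j. i < m \<Longrightarrow> j < n \<Longrightarrow> M i j = (if \<sigma> j = i then p j else 0)"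
      using graph_of_single_support[OF assms(1) less.prems(2)] by blast
    thus ?thesis using cond_ent_cong[of m n M] cond_ent_graph[of n \<sigma> m p] by auto
  next
    case False
    then obtain i1 i2 j where ij: "i1 < m" "i2 < m" "j < n" "M i1 j \<noteq> 0" "M i2 j \<noteq> 0" "i1 \<noteq> i2"
      by blast
    obtain l M1 M2 where l: "0 \<le> l" "l \<le> 1"
      and nonneg: "\<forall>i<m. \<forall>j<n. 0 \<le> M1 i j" "\<forall>i<m. \<forall>j<n. 0 \<le> M2 i j"
      and sums: "\<forall>j. (\<Sum>i<m. M1 i j) = (\<Sum>i<m. M i j)" "\<forall>j. (\<Sum>i<m. M2 i j) = (\<Sum>i<m. M i j)"
      and card: "card (support m n M1) < card (support m n M)"
        "card (support m n M2) < card (support m n M)"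
      and M: "M = (\<lambda>i j. l * M1 i j + (1 - l) * M2 i j)"
      by (rule split_column[OF less.prems(1) ij(3,1,2,6,4,5)])
    obtain \<sigma>1 where \<sigma>1: "\<forall>j<n. \<sigma>1 j < m"
      "(\<Sum>j<n. ent_term (p j)) - (\<Sum>i<m. ent_term (aggregate n \<sigma>1 p i)) \<le> cond_ent m n M1"
      using less.hyps[OF card(1) nonneg(1)] sums(1) less.prems(2) by auto
    obtain \<sigma>2 where \<sigma>2: "\<forall>j<n. \<sigma>2 j < m"
      "(\<Sum>j<n. ent_term (p j)) - (\<Sum>i<m. ent_term (aggregate n \<sigma>2 p i)) \<le> cond_ent m n M2"
      using less.hyps[OF card(2) nonneg(2)] sums(2) less.prems(2) by auto
    have "min (cond_ent m n M1) (cond_ent m n M2) \<le> l * cond_ent m n M1 + (1 - l) * cond_ent m n M2"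
      using convex_bound_le[of "- cond_ent m n M1" "- min (cond_ent m n M1) (cond_ent m n M2)"
          "- cond_ent m n M2" l "1 - l"] l by simp
    also have "\<dots> \<le> cond_ent m n M" using cond_ent_concave[OF l nonneg] M by simp
    finally show ?thesis using \<sigma>1 \<sigma>2 by (cases "cond_ent m n M1 \<le> cond_ent m n M2") auto
  qed
qed

lemma sum_ent_aggregate_le:
  assumes "\<And>j. j < n \<Longrightarrow> 0 \<le> p j" "\<And>j. j < n \<Longrightarrow> \<sigma> j < m"
  shows "(\<Sum>i<m. ent_term (aggregate n \<sigma> p i)) \<le> (\<Sum>j<n. ent_term (p j))"
proof -
  have "(\<Sum>i<m. ent_term (aggregate n \<sigma> p i)) \<le> (\<Sum>i<m. \<Sum>j\<in>{j\<in>{..<n}. \<sigma> j = i}. ent_term (p j))"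
    unfolding aggregate_def using assms(1) by (intro sum_mono ent_term_sum_le) auto
  also have "\<dots> = (\<Sum>j<n. ent_term (p j))" using assms(2) by (intro sum.group) auto
  finally show ?thesis .
qed

lemma ent_sum_add_le:
  assumes "finite T" "0 < a" "\<And>j. j \<in> T \<Longrightarrow> a \<le> p j" "0 \<le> r"
  shows "ent_term (sum p T + r)
           \<le> (\<Sum>j\<in>T. ent_term (p j)) - r * log 2 a + (a * (1 - real (card T)) - r) / ln 2"
proof (cases "T = {}")
  case True
  thus ?thesis using ent_term_le_tangent[OF assms(4,2)] by (simp add: algebra_simps)
next
  case False
  define P where "P = sum p T"
  have "a \<le> P"
  proof -
    obtain j where "j \<in> T" using False by blast
    moreover have "p j \<le> P"
      unfolding P_def using assms \<open>j \<in> T\<close> by (intro member_le_sum) (auto intro: order_trans[of 0 a])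
    ultimately show ?thesis using assms(3) by force
  qed
  have "ent_term (P + r) \<le> - ((P + r) * log 2 P) + (P - (P + r)) / ln 2"
    using \<open>a \<le> P\<close> assms by (intro ent_term_le_tangent) auto
  also have "\<dots> = ent_term P - r * log 2 P - r / ln 2"
    using \<open>a \<le> P\<close> assms(2) by (simp add: ent_term_eq algebra_simps)
  also have "\<dots> \<le> ent_term P - r * log 2 a - r / ln 2"
    using \<open>a \<le> P\<close> assms by (simp add: mult_left_mono)
  also have "ent_term P \<le> (\<Sum>j\<in>T. ent_term (p j)) - (real (card T) - 1) * a / ln 2"
    using split_ent_ge_card[of T a p] assms False by (simp add: split_ent_def P_def)
  finally show ?thesis by (simp add: P_def diff_divide_distrib add_divide_distrib algebra_simps)
qed

lemma aggregate_split:
  assumes "Top \<subseteq> {..<n}"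
  shows "aggregate n \<sigma> p i = (\<Sum>j\<in>{j\<in>Top. \<sigma> j = i}. p j) + (\<Sum>j\<in>{j\<in>{..<n} - Top. \<sigma> j = i}. p j)"
proof -
  have "{j\<in>{..<n}. \<sigma> j = i} = {j\<in>Top. \<sigma> j = i} \<union> {j\<in>{..<n} - Top. \<sigma> j = i}"
    using assms by auto
  moreover have "finite {j\<in>Top. \<sigma> j = i}" using assms finite_subset by fastforce
  ultimately show ?thesis unfolding aggregate_def by (simp add: sum.union_disjoint disjoint_iff)
qed

lemma sum_ent_aggregate_le_blocks:
  assumes "\<And>j. j < n \<Longrightarrow> 0 \<le> p j" "\<And>j. j < n \<Longrightarrow> \<sigma> j < m"
    and "Top \<subseteq> {..<n}" "card Top < m" "s = (\<Sum>j\<in>{..<n} - Top. p j)" "0 < s"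
    and "\<And>j. j \<in> Top \<Longrightarrow> s / (real m - real (card Top)) \<le> p j"
  shows "(\<Sum>i<m. ent_term (aggregate n \<sigma> p i))
           \<le> (\<Sum>j\<in>Top. ent_term (p j)) + s * log 2 ((real m - real (card Top)) / s)"
proof -
  define a where "a = s / (real m - real (card Top))"
  have "0 < a" using assms(4,6) by (simp add: a_def)
  define T where "T i = {j\<in>Top. \<sigma> j = i}" for i
  define r where "r i = (\<Sum>j\<in>{j\<in>{..<n} - Top. \<sigma> j = i}. p j)" for i
  have "finite Top" using assms(3) finite_subset by blast
  have group: "(\<Sum>i<m. \<Sum>j\<in>{j\<in>A. \<sigma> j = i}. f j) = sum f A" if "A \<subseteq> {..<n}" for A f
    using that assms(2) finite_subset[OF that] by (intro sum.group) auto
  have split: "aggregate n \<sigma> p i = sum p (T i) + r i" for i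
    unfolding T_def r_def by (rule aggregate_split[OF assms(3)])
  have S1: "(\<Sum>i<m. \<Sum>j\<in>T i. ent_term (p j)) = (\<Sum>j\<in>Top. ent_term (p j))"
    using group[OF assms(3)] by (simp add: T_def)
  have S2: "(\<Sum>i<m. r i) = s"
    using group[of "{..<n} - Top" p] assms(5) by (simp add: r_def)
  have S3: "(\<Sum>i<m. real (card (T i))) = real (card Top)"
    using group[OF assms(3), of "\<lambda>_. 1 :: real"] by (simp add: T_def)
  have "(\<Sum>i<m. ent_term (aggregate n \<sigma> p i))
      \<le> (\<Sum>i<m. (\<Sum>j\<in>T i. ent_term (p j)) - r i * log 2 a + (a * (1 - real (card (T i))) - r i) / ln 2)"
    unfolding split using assms(1,3,7) \<open>0 < a\<close> \<open>finite Top\<close>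
    by (intro sum_mono ent_sum_add_le) (auto simp: T_def r_def a_def intro: sum_nonneg)
  also have "\<dots> = (\<Sum>i<m. \<Sum>j\<in>T i. ent_term (p j)) - (\<Sum>i<m. r i) * log 2 a
      + (a * (real m - (\<Sum>i<m. real (card (T i)))) - (\<Sum>i<m. r i)) / ln 2"
    by (simp add: sum.distrib sum_subtractf sum_distrib_right sum_divide_distrib[symmetric]
        right_diff_distrib sum_distrib_left)
  also have "\<dots> = (\<Sum>j\<in>Top. ent_term (p j)) + s * log 2 ((real m - real (card Top)) / s)"
  proof -
    have "a * (real m - real (card Top)) = s" using assms(4) by (simp add: a_def)
    moreover have "log 2 a = - log 2 ((real m - real (card Top)) / s)"
      using assms(4,6) by (simp add: a_def log_divide)
    ultimately show ?thesis by (simp add: S1 S2 S3)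
  qed
  finally show ?thesis .
qed

text \<open>The right-hand side is the entropy of the entries in \<open>Top\<close> together with \<open>m - card Top\<close>
  blocks sharing the remaining mass \<open>s\<close> equally (for \<open>s = 0\<close> the second term vanishes, as
  \<open>log 2 0 = 0\<close>).\<close>
lemma sum_ent_aggregate_le_top:
  assumes "\<And>j. j < n \<Longrightarrow> 0 \<le> p j" "\<And>j. j < n \<Longrightarrow> \<sigma> j < m"
    and "Top \<subseteq> {..<n}" "card Top < m" "s = (\<Sum>j\<in>{..<n} - Top. p j)"
    and "\<And>j. j \<in> Top \<Longrightarrow> s / (real m - real (card Top)) \<le> p j"
  shows "(\<Sum>i<m. ent_term (aggregate n \<sigma> p i))
           \<le> (\<Sum>j\<in>Top. ent_term (p j)) + s * log 2 ((real m - real (card Top)) / s)"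
proof (cases "s = 0")
  case True
  hence "p j = 0" if "j \<in> {..<n} - Top" for j
    using assms(1,5) that sum_nonneg_eq_0_iff[of "{..<n} - Top" p] by auto
  hence "(\<Sum>j<n. ent_term (p j)) = (\<Sum>j\<in>Top. ent_term (p j))"
    using assms(3) by (intro sum.mono_neutral_right) auto
  thus ?thesis using sum_ent_aggregate_le[of n p \<sigma> m] assms(1,2) True by simp
next
  case False
  moreover have "0 \<le> s" unfolding assms(5) using assms(1) by (intro sum_nonneg) auto
  ultimately show ?thesis using assms by (intro sum_ent_aggregate_le_blocks) auto
qed

lemma mult_ln_le_chord:
  fixes t :: real assumes "1 \<le> t" "t \<le> 2" shows "t * ln t \<le> 2 * ln 2 * (t - 1)"
proof (cases "t \<le> 2 * ln 2")
  case True
  have "t * ln t \<le> t * (t - 1)" using assms by (intro mult_left_mono ln_le_minus_one) auto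
  also have "\<dots> \<le> 2 * ln 2 * (t - 1)" using True assms by (intro mult_right_mono) auto
  finally show ?thesis .
next
  case False
  have "t * ln (t / 2) \<le> t * (t / 2 - 1)" using assms by (intro mult_left_mono ln_le_minus_one) auto
  also have "\<dots> = t / 2 * (t - 2)" by (simp add: algebra_simps)
  also have "\<dots> \<le> ln 2 * (t - 2)" using False assms by (intro mult_right_mono_neg) auto
  finally show ?thesis using assms by (simp add: ln_div algebra_simps)
qed

lemma neg_ent_term_le_chord:
  assumes "0 < c" "c \<le> x" "x \<le> 2 * c"
  shows "- ent_term x \<le> x * log 2 c + 2 * (x - c)"
proof -
  define t where "t = x / c"
  have t: "1 \<le> t" "t \<le> 2" and x: "x = c * t" using assms by (auto simp: t_def field_simps)
  have "x * ln x = x * ln c + c * (t * ln t)" using assms t by (simp add: x ln_mult algebra_simps)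
  also have "\<dots> \<le> x * ln c + c * (2 * ln 2 * (t - 1))"
    using mult_ln_le_chord[OF t] assms by (simp add: mult_left_mono)
  finally have "x * ln x / ln 2 \<le> (x * ln c + 2 * ln 2 * (x - c)) / ln 2"
    by (simp add: x algebra_simps divide_right_mono)
  thus ?thesis by (simp add: ent_term_eq log_def add_divide_distrib)
qed

lemma sum_mset_neg_ent_le_chord:
  assumes "0 < c" "\<And>x. x \<in># R \<Longrightarrow> c \<le> x \<and> x \<le> 2 * c"
  shows "- (\<Sum>x\<in>#R. ent_term x) \<le> sum_mset R * log 2 c + 2 * sum_mset R - 2 * real (size R) * c"
proof -
  have "0 \<le> ent_term x + x * (log 2 c + 2) + - 2 * c" if "x \<in># R" for x
    using neg_ent_term_le_chord[of c x] assms(2)[OF that] assms(1) by (simp add: algebra_simps)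
  hence "0 \<le> (\<Sum>x\<in>#R. ent_term x + x * (log 2 c + 2) + - 2 * c)"
    using sum_mset_mono[of R "\<lambda>_. 0" "\<lambda>x. ent_term x + x * (log 2 c + 2) + - 2 * c"] by simp
  also have "\<dots> = (\<Sum>x\<in>#R. ent_term x) + (sum_mset R * log 2 c + 2 * sum_mset R - 2 * real (size R) * c)"
    by (simp only: sum_mset.distrib sum_mset_distrib_right[symmetric]) (simp add: algebra_simps)
  finally show ?thesis by simp
qed

text \<open>The chord bound is largest at \<open>c = s / (2 u ln 2)\<close>, where \<open>s = sum_mset R\<close> and
  \<open>u = size R\<close>; this worst case produces \<open>alpha\<close>.\<close>
lemma sum_ent_ge_within_factor_two:
  assumes "0 \<le> c" "\<And>x. x \<in># R \<Longrightarrow> c \<le> x \<and> x \<le> 2 * c" "R \<noteq> {#}"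
  shows "sum_mset R * log 2 (real (size R) / sum_mset R) - sum_mset R * alpha \<le> (\<Sum>x\<in>#R. ent_term x)"
proof (cases "c = 0")
  case True
  have zero: "x = 0" if "x \<in># R" for x using assms(2)[OF that] True by simp
  have "sum_mset R = 0" by (rule sum_mset.neutral) (use zero in blast)
  moreover have "(\<Sum>x\<in>#R. ent_term x) = 0" by (rule sum_mset.neutral) (use zero in fastforce)
  ultimately show ?thesis by simp
next
  case False
  define s where "s = sum_mset R"
  define u where "u = real (size R)"
  have "0 < c" "0 < u" using assms False by (auto simp: u_def nonempty_has_size)
  have "u * c \<le> s" using assms sum_mset_mono[of R "\<lambda>_. c" "\<lambda>x. x"] by (simp add: s_def u_def)
  hence "0 < s" using mult_pos_pos[OF \<open>0 < u\<close> \<open>0 < c\<close>] by linarith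
  have chord: "- (\<Sum>x\<in>#R. ent_term x) \<le> s * log 2 c + 2 * s - 2 * u * c"
    using sum_mset_neg_ent_le_chord[OF \<open>0 < c\<close> assms(2)] by (simp add: s_def u_def)
  define b where "b = s / (2 * ln 2 * u * c)"
  have "0 < b" using \<open>0 < s\<close> \<open>0 < u\<close> \<open>0 < c\<close> by (simp add: b_def)
  have "ln (1 / b) \<le> 1 / b - 1" using \<open>0 < b\<close> by (intro ln_le_minus_one) simp
  hence "0 \<le> s / ln 2 * (ln b + 1 / b - 1)" using \<open>0 < b\<close> \<open>0 < s\<close> by (simp add: ln_div)
  also have "ln b = ln s - ln 2 - ln (ln 2) - ln u - ln c"
    using \<open>0 < s\<close> \<open>0 < u\<close> \<open>0 < c\<close> by (simp add: b_def ln_div ln_mult)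
  also have "1 / b = 2 * ln 2 * u * c / s" by (simp add: b_def)
  also have "s / ln 2 * (ln s - ln 2 - ln (ln 2) - ln u - ln c + 2 * ln 2 * u * c / s - 1)
      = - (s * log 2 c + 2 * s - 2 * u * c) - (s * log 2 (u / s) - s * alpha)"
    using \<open>0 < s\<close> \<open>0 < u\<close> by (simp add: alpha_def log_def ln_div field_simps)
  finally show ?thesis using chord by (simp add: s_def u_def)
qed

lemma huffman_step_shape:
  assumes "2 \<le> length xs"
  obtains x y rest where "sort xs = x # y # rest" "x \<le> y" "\<forall>z\<in>set rest. y \<le> z"
    "huffman_step xs = rev (sort ((x + y) # rest))"
proof -
  obtain x y rest where s: "sort xs = x # y # rest"
    using assms by (metis length_sort Suc_le_length_iff numeral_2_eq_2)
  moreover have "sorted (x # y # rest)" by (metis s sorted_sort)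
  ultimately show ?thesis by (intro that) (auto simp: huffman_step_def Let_def)
qed

lemma length_huffman_step: "2 \<le> length xs \<Longrightarrow> length (huffman_step xs) = length xs - 1"
  by (simp add: huffman_step_def Let_def)

text \<open>Entries of \<open>xs\<close> above twice its minimum are untouched entries of \<open>p\<close>. This survives a
  merge of the two smallest entries \<open>x \<le> y\<close>: the new entry is \<open>x + y \<le> 2 y\<close>, and the new
  minimum is at least \<open>y\<close>.\<close>
definition huffman_inv :: "real list \<Rightarrow> real list \<Rightarrow> bool" where
  "huffman_inv p xs \<longleftrightarrow> (\<forall>z\<in>set xs. 0 \<le> z) \<and> sum_list xs = sum_list p \<and>
     (\<forall>\<theta>. 2 * Min (set xs) \<le> \<theta> \<longrightarrow> filter_mset (\<lambda>z. \<theta> < z) (mset xs) = filter_mset (\<lambda>z. \<theta> < z) (mset p))"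

lemma huffman_inv_step:
  assumes "huffman_inv p xs" "2 \<le> length xs"
  shows "huffman_inv p (huffman_step xs)"
proof -
  obtain x y rest where s: "sort xs = x # y # rest" and "x \<le> y" "\<forall>z\<in>set rest. y \<le> z"
    and h: "huffman_step xs = rev (sort ((x + y) # rest))"
    by (rule huffman_step_shape[OF assms(2)])
  have mset_xs: "mset xs = add_mset x (add_mset y (mset rest))" by (metis mset_sort s mset.simps(2))
  hence set_xs: "set xs = insert x (insert y (set rest))" by (metis set_mset_mset set_mset_add_mset_insert)
  have mset_h: "mset (huffman_step xs) = add_mset (x + y) (mset rest)" by (simp add: h)
  hence set_h: "set (huffman_step xs) = insert (x + y) (set rest)" by (metis set_mset_mset set_mset_add_mset_insert)
  have nonneg: "0 \<le> x" "0 \<le> y" "\<forall>z\<in>set rest. 0 \<le> z"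
    using assms(1) set_xs by (auto simp: huffman_inv_def)
  have min_xs: "Min (set xs) = x" using set_xs \<open>x \<le> y\<close> \<open>\<forall>z\<in>set rest. y \<le> z\<close> by (intro Min_eqI) auto
  have min_h: "y \<le> Min (set (huffman_step xs))"
    using set_h nonneg \<open>\<forall>z\<in>set rest. y \<le> z\<close> by simp
  have "filter_mset (\<lambda>z. \<theta> < z) (mset (huffman_step xs)) = filter_mset (\<lambda>z. \<theta> < z) (mset p)"
    if "2 * Min (set (huffman_step xs)) \<le> \<theta>" for \<theta>
  proof -
    have "2 * y \<le> \<theta>" using that min_h by linarith
    hence "filter_mset (\<lambda>z. \<theta> < z) (mset (huffman_step xs)) = filter_mset (\<lambda>z. \<theta> < z) (mset xs)"
      using \<open>x \<le> y\<close> nonneg by (simp add: mset_xs mset_h)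
    also have "\<dots> = filter_mset (\<lambda>z. \<theta> < z) (mset p)"
      using assms(1) min_xs \<open>2 * y \<le> \<theta>\<close> \<open>x \<le> y\<close> by (simp add: huffman_inv_def)
    finally show ?thesis .
  qed
  moreover have "sum_list (huffman_step xs) = sum_list xs"
    by (metis mset_h mset_xs sum_mset_sum_list sum_mset.add_mset add.assoc)
  ultimately show ?thesis
    using assms(1) set_h nonneg by (auto simp: huffman_inv_def)
qed

definition is_aggregation :: "real list \<Rightarrow> real list \<Rightarrow> bool" where
  "is_aggregation p xs \<longleftrightarrow> (\<exists>\<sigma>. (\<forall>j<length p. \<sigma> j < length xs) \<and>
     (\<forall>i<length xs. xs ! i = aggregate (length p) \<sigma> ((!) p) i))"

lemma is_aggregation_refl: "is_aggregation p p"
proof -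
  have "{j\<in>{..<length p}. j = i} = {i}" if "i < length p" for i using that by auto
  thus ?thesis unfolding is_aggregation_def aggregate_def by (intro exI[of _ id]) simp
qed

lemma is_aggregation_perm:
  assumes "is_aggregation p xs" "mset ys = mset xs"
  shows "is_aggregation p ys"
proof -
  obtain \<sigma> where \<sigma>: "\<forall>j<length p. \<sigma> j < length xs"
    "\<forall>i<length xs. xs ! i = aggregate (length p) \<sigma> ((!) p) i"
    using assms(1) by (auto simp: is_aggregation_def)
  obtain \<pi> where \<pi>: "\<pi> permutes {..<length xs}" "permute_list \<pi> xs = ys"
    using mset_eq_permutation[OF assms(2)] by blast
  have len: "length ys = length xs" using \<pi>(2) by auto
  show ?thesis unfolding is_aggregation_def
  proof (intro exI[of _ "\<lambda>j. inv \<pi> (\<sigma> j)"] conjI allI impI)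
    fix j assume "j < length p"
    thus "inv \<pi> (\<sigma> j) < length ys"
      using \<sigma>(1) permutes_in_image[OF permutes_inv[OF \<pi>(1)], of "\<sigma> j"] len by simp
  next
    fix i assume i: "i < length ys"
    have "ys ! i = xs ! \<pi> i" using \<pi> i len by (metis permute_list_nth)
    also have "\<dots> = aggregate (length p) \<sigma> ((!) p) (\<pi> i)"
      using \<sigma>(2) permutes_in_image[OF \<pi>(1), of i] i len by simp
    also have "{j\<in>{..<length p}. \<sigma> j = \<pi> i} = {j\<in>{..<length p}. inv \<pi> (\<sigma> j) = i}"
      using \<pi>(1) by (auto simp: permutes_inv_eq)
    hence "aggregate (length p) \<sigma> ((!) p) (\<pi> i) = aggregate (length p) (\<lambda>j. inv \<pi> (\<sigma> j)) ((!) p) i"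
      by (simp add: aggregate_def)
    finally show "ys ! i = aggregate (length p) (\<lambda>j. inv \<pi> (\<sigma> j)) ((!) p) i" .
  qed
qed

lemma is_aggregation_merge:
  assumes "is_aggregation p (x # y # rest)"
  shows "is_aggregation p ((x + y) # rest)"
proof -
  obtain \<sigma> where \<sigma>: "\<forall>j<length p. \<sigma> j < length (x # y # rest)"
    "\<forall>i<length (x # y # rest). (x # y # rest) ! i = aggregate (length p) \<sigma> ((!) p) i"
    using assms by (auto simp: is_aggregation_def)
  show ?thesis unfolding is_aggregation_def
  proof (intro exI[of _ "\<lambda>j. \<sigma> j - 1"] conjI allI impI)
    fix j assume "j < length p"
    thus "\<sigma> j - 1 < length ((x + y) # rest)" using \<sigma>(1) by auto
  next
    fix i assume i: "i < length ((x + y) # rest)"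
    show "((x + y) # rest) ! i = aggregate (length p) (\<lambda>j. \<sigma> j - 1) ((!) p) i"
    proof (cases i)
      case 0
      have "{j\<in>{..<length p}. \<sigma> j - 1 = 0} = {j\<in>{..<length p}. \<sigma> j = 0} \<union> {j\<in>{..<length p}. \<sigma> j = 1}"
        by auto
      hence "aggregate (length p) (\<lambda>j. \<sigma> j - 1) ((!) p) 0
          = aggregate (length p) \<sigma> ((!) p) 0 + aggregate (length p) \<sigma> ((!) p) 1"
        by (simp add: aggregate_def sum.union_disjoint disjoint_iff)
      thus ?thesis using \<sigma>(2)[rule_format, of 0] \<sigma>(2)[rule_format, of 1] 0 by simp
    next
      case (Suc k)
      have "{j\<in>{..<length p}. \<sigma> j - 1 = i} = {j\<in>{..<length p}. \<sigma> j = Suc i}" using Suc by auto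
      thus ?thesis using \<sigma>(2)[rule_format, of "Suc i"] i Suc by (simp add: aggregate_def)
    qed
  qed
qed

lemma is_aggregation_huffman_step:
  assumes "is_aggregation p xs" "2 \<le> length xs"
  shows "is_aggregation p (huffman_step xs)"
proof -
  obtain x y rest where s: "sort xs = x # y # rest"
    and h: "huffman_step xs = rev (sort ((x + y) # rest))"
    by (rule huffman_step_shape[OF assms(2)])
  have "is_aggregation p (sort xs)" using assms(1) by (rule is_aggregation_perm) simp
  hence "is_aggregation p ((x + y) # rest)" unfolding s by (rule is_aggregation_merge)
  thus ?thesis unfolding h by (rule is_aggregation_perm) simp
qed

lemma huffman_iterate:
  assumes "\<forall>z\<in>set p. 0 \<le> z" "t < length p"
  shows "huffman_inv p ((huffman_step ^^ t) p) \<and> is_aggregation p ((huffman_step ^^ t) p)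
           \<and> length ((huffman_step ^^ t) p) = length p - t"
  using assms(2)
proof (induction t)
  case 0
  thus ?case using assms(1) by (simp add: huffman_inv_def is_aggregation_refl)
next
  case (Suc t)
  hence "2 \<le> length ((huffman_step ^^ t) p)" by simp
  with Suc show ?case
    by (simp add: huffman_inv_step is_aggregation_huffman_step length_huffman_step)
qed

lemma sum_mset_filter_mset_nth:
  "(\<Sum>x\<in>#filter_mset P (mset xs). f x) = (\<Sum>j\<in>{j\<in>{..<length xs}. P (xs ! j)}. f (xs ! j))"
proof -
  have "mset xs = image_mset (\<lambda>j. xs ! j) (mset_set {..<length xs})"
    by (metis map_nth mset_map mset_upt atLeast0LessThan)
  thus ?thesis
    by (simp add: filter_mset_image_mset sum_unfold_sum_mset[of "\<lambda>j. f (xs ! j)"]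
        image_mset.compositionality o_def)
qed

lemma huffman_inv_decomp:
  assumes "huffman_inv p qb" "qb \<noteq> []" "c = Min (set qb)"
  defines "Top \<equiv> {j\<in>{..<length p}. 2 * c < p ! j}"
    and "R \<equiv> filter_mset (\<lambda>z. \<not> 2 * c < z) (mset qb)"
  shows "H qb = (\<Sum>j\<in>Top. ent_term (p ! j)) + (\<Sum>z\<in>#R. ent_term z)"
    and "real (size R) = real (length qb) - real (card Top)"
    and "sum_mset R = (\<Sum>j\<in>{..<length p} - Top. p ! j)"
    and "\<And>z. z \<in># R \<Longrightarrow> c \<le> z \<and> z \<le> 2 * c"
    and "R \<noteq> {#}"
proof -
  have "mset qb = filter_mset (\<lambda>z. 2 * c < z) (mset p) + R"
    using assms(1) multiset_partition[of "mset qb" "\<lambda>z. 2 * c < z"] by (simp add: huffman_inv_def assms(3) R_def)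
  hence part: "(\<Sum>z\<in>#mset qb. f z) = (\<Sum>j\<in>Top. f (p ! j)) + (\<Sum>z\<in>#R. f z)" for f :: "real \<Rightarrow> real"
    by (simp add: Top_def sum_mset_filter_mset_nth)
  show "H qb = (\<Sum>j\<in>Top. ent_term (p ! j)) + (\<Sum>z\<in>#R. ent_term z)"
    using part[of ent_term] by (simp add: H_def flip: sum_mset_sum_list)
  show "real (size R) = real (length qb) - real (card Top)"
    using part[of "\<lambda>_. 1"] by simp
  have "Top \<subseteq> {..<length p}" by (auto simp: Top_def)
  hence "sum_list p = (\<Sum>j\<in>Top. p ! j) + (\<Sum>j\<in>{..<length p} - Top. p ! j)"
    using sum.subset_diff[of Top "{..<length p}" "(!) p"] by (simp add: sum_list_sum_nth atLeast0LessThan)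
  thus "sum_mset R = (\<Sum>j\<in>{..<length p} - Top. p ! j)"
    using part[of "\<lambda>z. z"] assms(1) by (simp add: huffman_inv_def sum_mset_sum_list)
  show "\<And>z. z \<in># R \<Longrightarrow> c \<le> z \<and> z \<le> 2 * c" by (auto simp: R_def assms(3))
  have "c \<in> set qb" "0 \<le> c" using assms by (auto simp: huffman_inv_def)
  thus "R \<noteq> {#}" by (auto simp: R_def)
qed

lemma sum_ent_aggregate_le_huffman:
  assumes "\<forall>z\<in>set p. 0 \<le> z" "sum_list p = 1" "huffman_inv p qb" "length qb = m" "0 < m"
    and "\<And>j. j < length p \<Longrightarrow> \<sigma> j < m"
  shows "(\<Sum>i<m. ent_term (aggregate (length p) \<sigma> ((!) p) i)) \<le> H qb + alpha"
proof -
  define n where "n = length p"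
  define c where "c = Min (set qb)"
  define Top where "Top = {j\<in>{..<n}. 2 * c < p ! j}"
  define R where "R = filter_mset (\<lambda>z. \<not> 2 * c < z) (mset qb)"
  define s where "s = (\<Sum>j\<in>{..<n} - Top. p ! j)"
  have "qb \<noteq> []" using assms(4,5) by auto
  note decomp = huffman_inv_decomp[OF assms(3) this c_def, folded n_def, folded Top_def R_def s_def]
  have p_nonneg: "0 \<le> p ! j" if "j < n" for j using assms(1) that by (simp add: n_def)
  have "0 \<le> c" using decomp(4,5) by fastforce
  have "Top \<subseteq> {..<n}" by (auto simp: Top_def)
  have "0 \<le> s" unfolding s_def using p_nonneg by (intro sum_nonneg) auto
  have "s \<le> (\<Sum>j<n. p ! j)" unfolding s_def using p_nonneg by (intro sum_mono2) auto
  hence "s \<le> 1" using assms(2) by (simp add: n_def sum_list_sum_nth atLeast0LessThan)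
  have "s \<le> real (size R) * (2 * c)" using decomp(3,4) sum_mset_mono[of R "\<lambda>x. x" "\<lambda>_. 2 * c"] by simp
  moreover have "0 < real (size R)" using decomp(5) by (simp add: nonempty_has_size)
  ultimately have "s / real (size R) \<le> 2 * c" by (simp add: pos_divide_le_eq mult.commute)
  hence big: "s / real (size R) \<le> p ! j" if "j \<in> Top" for j using that by (auto simp: Top_def)
  have size: "real (size R) = real m - real (card Top)" using decomp(2) assms(4) by simp
  hence "card Top < m" using \<open>0 < real (size R)\<close> by linarith
  have "(\<Sum>i<m. ent_term (aggregate n \<sigma> ((!) p) i))
      \<le> (\<Sum>j\<in>Top. ent_term (p ! j)) + s * log 2 (real (size R) / s)"
    unfolding size using assms(6) big size
    by (intro sum_ent_aggregate_le_top[OF p_nonneg _ \<open>Top \<subseteq> {..<n}\<close> \<open>card Top < m\<close> s_def])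
      (auto simp: n_def)
  also have "\<dots> \<le> H qb + s * alpha"
    using sum_ent_ge_within_factor_two[OF \<open>0 \<le> c\<close> decomp(4,5)] decomp(1,3) by simp
  also have "\<dots> \<le> H qb + alpha" using \<open>0 \<le> s\<close> \<open>s \<le> 1\<close> alpha_nonneg by (simp add: mult_left_le_one_le)
  finally show ?thesis by (simp add: n_def)
qed

lemma H_eq_sum_nth: "H xs = (\<Sum>i<length xs. ent_term (xs ! i))"
  by (simp add: H_def sum_list_sum_nth atLeast0LessThan)

lemma mat_entropy_ge_H:
  assumes "coupling p q M"
  shows "H p \<le> mat_entropy (length q) (length p) M"
proof -
  have "H p = (\<Sum>j<length p. ent_term (\<Sum>i<length q. M i j))"
    using assms by (simp add: coupling_def H_eq_sum_nth)
  also have "\<dots> \<le> (\<Sum>j<length p. \<Sum>i<length q. ent_term (M i j))"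
    using assms by (intro sum_mono ent_term_sum_le) (auto simp: coupling_def)
  also have "\<dots> = mat_entropy (length q) (length p) M" unfolding mat_entropy_def by (rule sum.swap)
  finally show ?thesis .
qed

lemma W_le_H_of_aggregation:
  assumes "\<forall>z\<in>set p. 0 \<le> z" "is_aggregation p q"
  shows "W p q \<le> H p"
proof -
  obtain \<sigma> where \<sigma>: "\<forall>j<length p. \<sigma> j < length q"
    "\<forall>i<length q. q ! i = aggregate (length p) \<sigma> ((!) p) i"
    using assms(2) by (auto simp: is_aggregation_def)
  define M where "M = (\<lambda>i j. if \<sigma> j = i then p ! j else 0)"
  have "coupling p q M"
    using assms(1) \<sigma> by (auto simp: coupling_def M_def sum_graph_row)
  moreover have "mat_entropy (length q) (length p) M = H p"
    using \<sigma>(1) by (simp add: M_def mat_entropy_graph H_eq_sum_nth)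
  ultimately show ?thesis
    unfolding W_def by (force intro!: cInf_lower bdd_belowI[of _ "H p"] mat_entropy_ge_H)
qed

lemma coupling_product:
  assumes "prob_vec p" "prob_vec q"
  shows "coupling p q (\<lambda>i j. q ! i * p ! j)"
  using assms
  by (auto simp: coupling_def prob_vec_def sum_distrib_left[symmetric] sum_distrib_right[symmetric]
      sum_list_sum_nth atLeast0LessThan)

lemma D_ge_H_minus_aggregate_bound:
  assumes "prob_vec p" "prob_vec q" "length q = m" "0 < m"
    and "\<And>\<sigma>. \<forall>j<length p. \<sigma> j < m \<Longrightarrow> (\<Sum>i<m. ent_term (aggregate (length p) \<sigma> ((!) p) i)) \<le> B"
  shows "H p - B \<le> D p q"
proof -
  define n where "n = length p"
  let ?S = "{mat_entropy (length q) (length p) M | M. coupling p q M}"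
  have "?S \<noteq> {}" using coupling_product[OF assms(1,2)] by blast
  moreover have "(H p + H q + (H p - B)) / 2 \<le> x" if "x \<in> ?S" for x
  proof -
    obtain M where M: "coupling p q M" and x: "x = mat_entropy m n M"
      using \<open>x \<in> ?S\<close> by (auto simp: assms(3) n_def)
    have "\<forall>i<m. \<forall>j<n. 0 \<le> M i j" "\<forall>j<n. (\<Sum>i<m. M i j) = p ! j"
      using M assms(3) by (auto simp: coupling_def n_def)
    then obtain \<sigma> where "\<forall>j<n. \<sigma> j < m"
      and \<sigma>: "(\<Sum>j<n. ent_term (p ! j)) - (\<Sum>i<m. ent_term (aggregate n \<sigma> ((!) p) i)) \<le> cond_ent m n M"
      using cond_ent_ge_graph[OF assms(4)] by blast
    have "cond_ent m n M = x - H q"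
      using M assms(3) by (simp add: cond_ent_eq x coupling_def H_eq_sum_nth n_def)
    moreover have "H p \<le> x" using mat_entropy_ge_H[OF M] x assms(3) by (simp add: n_def)
    ultimately show ?thesis
      using \<sigma> assms(5)[OF \<open>\<forall>j<n. \<sigma> j < m\<close>[unfolded n_def]] by (simp add: H_eq_sum_nth n_def)
  qed
  ultimately have "(H p + H q + (H p - B)) / 2 \<le> W p q" unfolding W_def by (rule cInf_greatest)
  thus ?thesis by (simp add: D_def)
qed

theorem mainTheorem14:
  fixes p :: "real list" and n m :: nat
  assumes "length p = n" and "n > m" and "m \<ge> 2"
    and "prob_vec p" and "sorted_wrt (\<ge>) p"
  shows "D p ((huffman_step ^^ (n - m)) p)
           \<le> (INF q \<in> {q. prob_vec q \<and> length q = m}. D p q)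
              + (1 - (1 + ln (ln 2)) / ln 2)
         \<and> 1 - (1 + ln (ln 2)) / ln (2::real) < 0.08608"
proof -
  define qb where "qb = (huffman_step ^^ (n - m)) p"
  have p: "\<forall>z\<in>set p. 0 \<le> z" "sum_list p = 1" using assms(4) by (auto simp: prob_vec_def)
  have qb: "huffman_inv p qb" "is_aggregation p qb" "length qb = m"
    using huffman_iterate[OF p(1), of "n - m"] assms(1-3) by (auto simp: qb_def)
  have upper: "D p qb \<le> H p - H qb"
    using W_le_H_of_aggregation[OF p(1) qb(2)] by (simp add: D_def)
  have "H p - (H qb + alpha) \<le> D p q" if "q \<in> {q. prob_vec q \<and> length q = m}" for q
    using that assms(3,4) qb(1,3) p
    by (intro D_ge_H_minus_aggregate_bound[where m = m] sum_ent_aggregate_le_huffman) auto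
  moreover have "prob_vec (1 # replicate (m - 1) 0) \<and> length (1 # replicate (m - 1) (0::real)) = m"
    using assms(3) by (simp add: prob_vec_def sum_list_replicate)
  ultimately have "H p - (H qb + alpha) \<le> (INF q \<in> {q. prob_vec q \<and> length q = m}. D p q)"
    by (intro cINF_greatest) blast+
  thus ?thesis using upper alpha_less unfolding qb_def alpha_def by linarith
qed

end
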